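(* Let $n\ge0$ and $k\ge1$ be integers, $\rho\ne0$ real, $0\le q<1$, and $x,y$ complex numbers. Then $$B_{n,\rho,q}^{(k)}(x)=\sum_{l=0}^{n}\sum_{m=0}^{n}(-1)^{n-m}m!\,\rho^{n-l}S_2\!\left(n,m,\tfrac{x}{\rho}\right)S_2\!\left(m,l,\tfrac{y}{\rho}\right)c_{l,\rho,q}^{(k)}(y),$$ $$B_{n,\rho,q}^{(k)}(x)=\sum_{l=0}^{n}\sum_{m=0}^{n}(-1)^{n}m!\,\rho^{n-l}S_2\!\left(n,m,\tfrac{x}{\rho}\right)S_2\!\left(m,l,-\tfrac{y}{\rho}\right)\widehat c_{l,\rho,q}^{(k)}(y),$$ $$c_{n,\rho,q}^{(k)}(x)=\sum_{l=0}^{n}\sum_{m=0}^{n}\frac{(-1)^{n-m}}{m!}\rho^{n-l}S_1\!\left(n,m,\tfrac{x}{\rho}\right)S_1\!\left(m,l,\tfrac{y}{\rho}\right)B_{l,\rho,q}^{(k)}(y),$$ $$\widehat c_{n,\rho,q}^{(k)}(x)=\sum_{l=0}^{n}\sum_{m=0}^{n}\frac{(-1)^{n}}{m!}\rho^{n-l}S_1\!\left(n,m,-\tfrac{x}{\rho}\right)S_1\!\left(m,l,\tfrac{y}{\rho}\right)B_{l,\rho,q}^{(k)}(y).$$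
   Context: For real $0\le q<1$ (with $0^0=1$), $[x]_q=\frac{1-q^x}{1-q}$. ${\rm Li}_{k,q}(w)=\sum_{m\ge1}w^m/[m]_q^k$. The $q$-poly-Bernoulli polynomials with parameter $\rho$: $\frac{\rho}{1-e^{-\rho t}}{\rm Li}_{k,q}\left(\frac{1-e^{-\rho t}}{\rho}\right)e^{-tz}=\sum_{n\ge0} B_{n,\rho,q}^{(k)}(z)\frac{t^n}{n!}$ (formal power series in $t$). Jackson's $q$-integral: $\int_0^1 f(x)\,d_qx=(1-q)\sum_{j\ge0} f(q^j)q^j$; multiple integrals are iterated. $(x)_n=x(x-1)\cdots(x-n+1)$, $(x)_0=1$. The $q$-poly-Cauchy polynomials of the first and second kind with parameter $\rho$ are $c_{n,\rho,q}^{(k)}(z)=\rho^n\int_0^1\cdots\int_0^1\left(\frac{x_1\cdots x_k-z}{\rho}\right)_n d_qx_1\cdots d_qx_k$ and $\widehat c_{n,\rho,q}^{(k)}(z)=\rho^n\int_0^1\cdots\int_0^1\left(\frac{-x_1\cdots x_k+z}{\rho}\right)_n d_qx_1\cdots d_qx_k$ ($k$-fold). Weighted Stirling numbers (Carlitz): $\frac{(1-t)^{-x}(-\ln(1-t))^m}{m!}=\sum_{n\ge0}S_1(n,m,x)\frac{t^n}{n!}$ and $\frac{e^{xt}(e^t-1)^m}{m!}=\sum_{n\ge0}S_2(n,m,x)\frac{t^n}{n!}$; both vanish when $n<m$. *)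

theory Defs
  imports "HOL-Analysis.Analysis" "HOL-Computational_Algebra.Formal_Power_Series"
begin

definition qnum :: "real \<Rightarrow> nat \<Rightarrow> real" where
  "qnum q m = (1 - q ^ m) / (1 - q)"

definition falling :: "complex \<Rightarrow> nat \<Rightarrow> complex" where
  "falling x n = (\<Prod>i<n. x - of_nat i)"

definition jackson_int :: "real \<Rightarrow> (real \<Rightarrow> complex) \<Rightarrow> complex" where
  "jackson_int q f = complex_of_real (1 - q) * (\<Sum>j. f (q ^ j) * complex_of_real (q ^ j))"

text \<open>k-fold iterated Jackson integral of F(x_1 * ... * x_k):
  multi_jackson q k F = int_0^1 d_q x_1 (int ... int F(x_1 * (x_2 ... x_k))).\<close>
fun multi_jackson :: "real \<Rightarrow> nat \<Rightarrow> (real \<Rightarrow> complex) \<Rightarrow> complex" where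
  "multi_jackson q 0 F = F 1"
| "multi_jackson q (Suc k) F = jackson_int q (\<lambda>x. multi_jackson q k (\<lambda>p. F (x * p)))"

definition qpoly_cauchy :: "nat \<Rightarrow> nat \<Rightarrow> real \<Rightarrow> real \<Rightarrow> complex \<Rightarrow> complex" where
  "qpoly_cauchy k n \<rho> q z = complex_of_real \<rho> ^ n *
     multi_jackson q k (\<lambda>p. falling ((complex_of_real p - z) / complex_of_real \<rho>) n)"

definition qpoly_cauchy_hat :: "nat \<Rightarrow> nat \<Rightarrow> real \<Rightarrow> real \<Rightarrow> complex \<Rightarrow> complex" where
  "qpoly_cauchy_hat k n \<rho> q z = complex_of_real \<rho> ^ n *
     multi_jackson q k (\<lambda>p. falling ((- complex_of_real p + z) / complex_of_real \<rho>) n)"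

text \<open>With W = (1 - e^{-\<rho> t})/\<rho> (zero constant term), we have
  \<rho>/(1-e^{-\<rho> t}) Li_{k,q}(W) = Li_{k,q}(W)/W = sum_{m>=1} W^(m-1)/[m]_q^k,
  i.e. the composition of the series L(w) = sum_{m>=0} w^m/[m+1]_q^k with W.\<close>
definition qW :: "real \<Rightarrow> complex fps" where
  "qW \<rho> = fps_const (1 / complex_of_real \<rho>) * (1 - fps_exp (- complex_of_real \<rho>))"

definition Li_div :: "nat \<Rightarrow> real \<Rightarrow> complex fps" where
  "Li_div k q = Abs_fps (\<lambda>m. 1 / complex_of_real (qnum q (Suc m) ^ k))"

definition qpoly_bernoulli :: "nat \<Rightarrow> nat \<Rightarrow> real \<Rightarrow> real \<Rightarrow> complex \<Rightarrow> complex" where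
  "qpoly_bernoulli k n \<rho> q z =
     fact n * fps_nth ((Li_div k q oo qW \<rho>) * fps_exp (- z)) n"

definition S2w :: "nat \<Rightarrow> nat \<Rightarrow> complex \<Rightarrow> complex" where
  "S2w n m x = fact n * fps_nth (fps_const (1 / fact m) * fps_exp x * (fps_exp 1 - 1) ^ m) n"

definition S1w :: "nat \<Rightarrow> nat \<Rightarrow> complex \<Rightarrow> complex" where
  "S1w n m x = fact n * fps_nth (fps_const (1 / fact m) * (fps_binomial (- x) oo (- fps_X)) *
       (- (fps_ln 1 oo (- fps_X))) ^ m) n"

end

theory Submission
  imports Defs
begin

text \<open>
  All four families are linear transforms of the one sequence \<open>a\<^sub>m = 1/[m+1]\<^sub>q\<^sup>k\<close>, the
  coefficients of \<open>Li_div k q\<close>. Reading off coefficients of the generating functions gives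
  \<open>B\<^sub>n(x) = \<Sum>\<^sub>m a\<^sub>m m! (-\<rho>)\<^sup>n\<^sup>-\<^sup>m S\<^sub>2(n,m,x/\<rho>)\<close>; for the Cauchy polynomials one first expands the
  falling factorial as a polynomial in \<open>p = x\<^sub>1\<cdots>x\<^sub>k\<close>, whose \<open>j\<close>-th moment under the \<open>k\<close>-fold
  Jackson integral is \<open>a\<^sub>j\<close>, and obtains \<open>c\<^sub>n(x) = \<Sum>\<^sub>m a\<^sub>m (-\<rho>)\<^sup>n\<^sup>-\<^sup>m S\<^sub>1(n,m,x/\<rho>)\<close>.
  The substitutions \<open>t \<mapsto> (e\<^sup>\<rho>\<^sup>t - 1)/\<rho>\<close> and \<open>t \<mapsto> ln(1 + \<rho>t)/\<rho>\<close> are mutually inverse, so each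
  expansion can be inverted to express \<open>a\<^sub>m\<close> through the \<open>c\<^sub>l(y)\<close> or the \<open>B\<^sub>l(y)\<close>; substituting
  one expansion into the other gives the identities. The hat polynomials are the plain ones at
  \<open>-\<rho>\<close>, up to the sign \<open>(-1)\<^sup>n\<close>.
\<close>

unbundle no vec_syntax
notation fps_nth (infixl "$" 75)

subsection \<open>Coefficients of composed power series\<close>

lemma fps_mult_power_nth_eq_0:
  fixes G H :: "'a::idom fps"
  assumes "G $ 0 = 0" and "n < m"
  shows "(H * G ^ m) $ n = 0"
proof -
  have "1 \<le> subdegree G \<or> G = 0"
    using assms(1) by (metis One_nat_def Suc_le_eq gr0I subdegree_eq_0_iff)
  then have G: "G = fps_shift 1 G * fps_X"
    using fps_shift_times_fps_X[of G] by auto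
  have "H * G ^ m = (H * fps_shift 1 G ^ m) * fps_X ^ m"
    by (subst G) (simp add: power_mult_distrib mult.assoc)
  then show ?thesis
    using assms(2) by (simp only:) (simp add: fps_X_power_mult_right_nth)
qed

lemma fps_mult_compose_nth:
  fixes F G H :: "'a::idom fps"
  assumes "G $ 0 = 0" and "n \<le> N"
  shows "(H * (F oo G)) $ n = (\<Sum>m=0..N. F $ m * (H * G ^ m) $ n)"
proof -
  define P where "P = (\<Sum>m=0..N. fps_const (F $ m) * G ^ m)"
  have "(F oo G) $ i = P $ i" if "i \<le> N" for i
  proof -
    have "P $ i = (\<Sum>m=0..N. F $ m * (G ^ m) $ i)"
      by (simp add: P_def fps_sum_nth)
    also have "\<dots> = (\<Sum>m=0..i. F $ m * (G ^ m) $ i)"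
      using that fps_mult_power_nth_eq_0[OF assms(1), of i _ 1]
      by (intro sum.mono_neutral_right) auto
    finally show ?thesis
      by (simp add: fps_compose_nth)
  qed
  then have "(H * (F oo G)) $ n = (H * P) $ n"
    unfolding fps_mult_nth using assms(2) by (intro sum.cong) auto
  also have "\<dots> = (\<Sum>m=0..N. F $ m * (H * G ^ m) $ n)"
    by (simp add: P_def sum_distrib_left fps_sum_nth mult.left_commute[of H])
  finally show ?thesis .
qed

lemma fps_compose_left_cancel:
  fixes A G K :: "'a::idom fps"
  assumes "G $ 0 = 0" and "K $ 0 = 0" and "G oo K = fps_X"
  shows "(A oo G) oo K = A"
  using fps_compose_assoc[OF assms(2,1), of A] assms(3) by simp

lemma fps_exp_mult_compose:
  fixes F :: "'a::field_char_0 fps"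
  assumes "F $ 0 = 0"
  shows "fps_exp (c * d) oo F = fps_exp c oo (fps_const d * F)"
proof -
  have "fps_exp c oo (fps_const d * fps_X) = fps_exp (c * d)"
    by (subst fps_exp_compose_linear) (simp add: mult.commute)
  then have "fps_exp (c * d) oo F = (fps_exp c oo (fps_const d * fps_X)) oo F"
    by (simp only:)
  also have "\<dots> = fps_exp c oo ((fps_const d * fps_X) oo F)"
    by (rule fps_compose_assoc[symmetric]) (use assms in simp_all)
  also have "(fps_const d * fps_X) oo F = fps_const d * F"
    using assms by (simp add: fps_compose_mult_distrib)
  finally show ?thesis .
qed

lemma fps_exp_diff_compose_nth:
  fixes G :: "'a::field_char_0 fps"
  assumes "G $ 0 = 0"
  shows "(fps_exp (p - z) oo G) $ n = (\<Sum>j=0..n. ((fps_exp (- z) oo G) * G ^ j) $ n / fact j * p ^ j)"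
proof -
  have "fps_exp (p - z) = fps_exp (- z) * fps_exp p"
    by (simp flip: fps_exp_add_mult)
  then have "fps_exp (p - z) oo G = (fps_exp (- z) oo G) * (fps_exp p oo G)"
    using assms by (simp add: fps_compose_mult_distrib)
  then show ?thesis
    using fps_mult_compose_nth[OF assms order.refl, of "fps_exp (- z) oo G" "fps_exp p"]
    by (simp add: mult_ac)
qed

lemma fps_binomial_eq_exp_compose_ln: "fps_binomial (c::'a::field_char_0) = fps_exp c oo fps_ln 1"
proof -
  let ?g = "fps_exp c oo fps_ln 1"
  have "fps_deriv ?g = fps_const c * ?g * inverse (1 + fps_X)"
    by (simp add: fps_compose_deriv fps_ln_deriv fps_compose_mult_distrib)
  then have "fps_deriv ?g = fps_const c * ?g / (1 + fps_X)"
    by (simp add: fps_divide_unit)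
  then show ?thesis
    using fps_binomial_ODE_unique'[of ?g c] by simp
qed

subsection \<open>The exponential and logarithmic substitutions\<close>

definition scaled_expm1 :: "complex \<Rightarrow> complex fps" where
  "scaled_expm1 s = fps_const (1 / s) * (fps_exp s - 1)"

definition scaled_ln1p :: "complex \<Rightarrow> complex fps" where
  "scaled_ln1p s = fps_const (1 / s) * (fps_ln 1 oo (fps_const s * fps_X))"

lemma scaled_expm1_nth_0 [simp]: "scaled_expm1 s $ 0 = 0"
  by (simp add: scaled_expm1_def)

lemma scaled_ln1p_nth_0 [simp]: "scaled_ln1p s $ 0 = 0"
  by (simp add: scaled_ln1p_def)

lemma qW_eq_scaled_expm1: "qW \<rho> = scaled_expm1 (- complex_of_real \<rho>)"
  by (simp add: qW_def scaled_expm1_def fps_eq_iff)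

lemma fps_expm1_compose_linear: "(fps_exp 1 - 1) oo (fps_const s * fps_X) = fps_exp (s::complex) - 1"
  by (simp add: fps_compose_sub_distrib)

lemma fps_ln_compose_linear:
  "s \<noteq> 0 \<Longrightarrow> fps_ln 1 oo (fps_const s * fps_X) = fps_const s * scaled_ln1p s"
  by (simp add: scaled_ln1p_def mult.assoc[symmetric] flip: fps_const_mult)

lemma fps_ln_compose_expm1: "fps_ln (1::complex) oo (fps_exp 1 - 1) = fps_X"
  using fps_inv_fps_exp_compose(1)[of "1::complex"] fps_ln_fps_exp_inv[of "1::complex"] by simp

lemma fps_expm1_compose_ln: "(fps_exp (1::complex) - 1) oo fps_ln 1 = fps_X"
  using fps_inv_fps_exp_compose(2)[of "1::complex"] fps_ln_fps_exp_inv[of "1::complex"] by simp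

lemma scaled_ln1p_compose_scaled_expm1:
  assumes "s \<noteq> 0"
  shows "scaled_ln1p s oo scaled_expm1 s = fps_X"
proof -
  have "(fps_const s * fps_X) oo scaled_expm1 s = (fps_exp 1 - 1) oo (fps_const s * fps_X)"
    using assms by (simp add: fps_expm1_compose_linear fps_compose_mult_distrib scaled_expm1_def
        mult.assoc[symmetric] flip: fps_const_mult)
  then have "(fps_ln 1 oo (fps_const s * fps_X)) oo scaled_expm1 s = fps_const s * fps_X"
    by (simp add: fps_compose_assoc[symmetric] fps_compose_assoc[of "fps_const s * fps_X"]
        fps_ln_compose_expm1)
  then show ?thesis
    using assms by (simp add: scaled_ln1p_def fps_compose_mult_distrib flip: fps_const_mult mult.assoc)
qed

lemma scaled_expm1_compose_scaled_ln1p: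
  assumes "s \<noteq> 0"
  shows "scaled_expm1 s oo scaled_ln1p s = fps_X"
proof -
  have "(fps_const s * fps_X) oo scaled_ln1p s = fps_ln 1 oo (fps_const s * fps_X)"
    using assms by (simp add: fps_ln_compose_linear fps_compose_mult_distrib)
  then have "((fps_exp 1 - 1) oo (fps_const s * fps_X)) oo scaled_ln1p s = fps_const s * fps_X"
    by (simp add: fps_compose_assoc[symmetric] fps_compose_assoc[of "fps_const s * fps_X"]
        fps_expm1_compose_ln)
  then show ?thesis
    using assms by (simp add: scaled_expm1_def fps_expm1_compose_linear fps_compose_mult_distrib
        flip: fps_const_mult mult.assoc)
qed

lemma fps_binomial_compose_linear:
  assumes "s \<noteq> 0"
  shows "fps_binomial c oo (fps_const s * fps_X) = fps_exp (c * s) oo scaled_ln1p s"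
  using assms
  by (simp add: fps_binomial_eq_exp_compose_ln fps_compose_assoc[symmetric] fps_ln_compose_linear
      fps_exp_mult_compose)

lemma falling_eq_fps_nth:
  assumes "s \<noteq> 0"
  shows "falling w n = fact n / s ^ n * (fps_exp (w * s) oo scaled_ln1p s) $ n"
proof -
  have "(fps_exp (w * s) oo scaled_ln1p s) $ n = s ^ n * (w gchoose n)"
    using fps_binomial_compose_linear[OF assms, of w] by (metis fps_binomial_nth fps_nth_compose_linear)
  moreover have "w gchoose n = falling w n / fact n"
    by (simp add: gbinomial_prod_rev falling_def atLeast0LessThan)
  ultimately show ?thesis
    using assms by simp
qed

subsection \<open>Weighted Stirling numbers as coefficients\<close>

lemma S2w_eq_fps_nth:
  assumes "s \<noteq> 0"
  shows "(fps_exp w * scaled_expm1 s ^ l) $ m = s ^ m / s ^ l * S2w m l (w / s) * fact l / fact m"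
proof -
  have "fps_exp (w / s) oo (fps_const s * fps_X) = fps_exp w"
    using assms by simp
  then have "(fps_exp (w / s) * (fps_exp 1 - 1) ^ l) oo (fps_const s * fps_X) = fps_exp w * (fps_exp s - 1) ^ l"
    by (simp add: fps_compose_mult_distrib fps_compose_power[symmetric] fps_expm1_compose_linear
        del: fps_exp_compose_linear)
  then have rescaled: "(fps_exp w * (fps_exp s - 1) ^ l) $ m = s ^ m * (fps_exp (w / s) * (fps_exp 1 - 1) ^ l) $ m"
    by (metis fps_nth_compose_linear)
  have "fps_exp w * scaled_expm1 s ^ l = fps_const ((1 / s) ^ l) * (fps_exp w * (fps_exp s - 1) ^ l)"
    by (simp add: scaled_expm1_def power_mult_distrib fps_const_power mult_ac)
  then have "(fps_exp w * scaled_expm1 s ^ l) $ m = (1 / s) ^ l * (fps_exp w * (fps_exp s - 1) ^ l) $ m"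
    by (simp only: fps_mult_left_const_nth)
  also have "\<dots> = (1 / s) ^ l * s ^ m * (fps_exp (w / s) * (fps_exp 1 - 1) ^ l) $ m"
    by (simp only: rescaled mult.assoc)
  also have "(fps_exp (w / s) * (fps_exp 1 - 1) ^ l) $ m = fact l / fact m * S2w m l (w / s)"
    by (simp add: S2w_def mult.assoc)
  finally show ?thesis
    using assms by (simp add: field_simps)
qed

lemma S1w_eq_fps_nth:
  assumes "s \<noteq> 0"
  shows "((fps_exp (- x) oo scaled_ln1p s) * scaled_ln1p s ^ m) $ n
    = (- s) ^ n / (- s) ^ m * S1w n m (x / s) * fact m / fact n"
proof -
  define P where "P = fps_binomial (- (x / s)) oo (- fps_X)"
  define Q where "Q = - (fps_ln 1 oo (- fps_X :: complex fps))"
  have neg_lin: "(- fps_X :: complex fps) oo (fps_const (- s) * fps_X) = fps_const s * fps_X"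
    by (simp add: fps_compose_uminus fps_eq_iff)
  have "P oo (fps_const (- s) * fps_X) = fps_exp (- x) oo scaled_ln1p s"
    using assms by (simp add: P_def fps_compose_assoc[symmetric] neg_lin fps_binomial_compose_linear)
  moreover have "Q oo (fps_const (- s) * fps_X) = fps_const (- s) * scaled_ln1p s"
  proof -
    have "Q oo (fps_const (- s) * fps_X) = - ((fps_ln 1 oo (- fps_X)) oo (fps_const (- s) * fps_X))"
      unfolding Q_def by (rule fps_compose_uminus)
    also have "(fps_ln 1 oo (- fps_X)) oo (fps_const (- s) * fps_X) = fps_ln 1 oo (fps_const s * fps_X)"
      by (subst fps_compose_assoc[symmetric]) (simp_all add: neg_lin)
    also have "\<dots> = fps_const s * scaled_ln1p s"
      using assms by (rule fps_ln_compose_linear)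
    finally show ?thesis
      by (metis fps_const_neg mult_minus_left)
  qed
  ultimately have "(P * Q ^ m) oo (fps_const (- s) * fps_X)
      = fps_const ((- s) ^ m) * ((fps_exp (- x) oo scaled_ln1p s) * scaled_ln1p s ^ m)"
    by (simp add: fps_compose_mult_distrib fps_compose_power[symmetric] power_mult_distrib
        fps_const_power mult_ac)
  then have "(- s) ^ n * (P * Q ^ m) $ n = (- s) ^ m * ((fps_exp (- x) oo scaled_ln1p s) * scaled_ln1p s ^ m) $ n"
    by (metis fps_mult_left_const_nth fps_nth_compose_linear)
  moreover have "(P * Q ^ m) $ n = fact m / fact n * S1w n m (x / s)"
    by (simp add: S1w_def P_def Q_def mult.assoc)
  ultimately show ?thesis
    using assms by (simp add: field_simps)
qed

subsection \<open>The q-integral of a polynomial\<close>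

lemma qnum_Suc_reciprocal:
  assumes "0 \<le> q" and "q < 1"
  shows "complex_of_real (1 - q) / (1 - complex_of_real (q ^ Suc j)) = 1 / complex_of_real (qnum q (Suc j))"
proof -
  have "1 - complex_of_real (q ^ Suc j) = complex_of_real (1 - q ^ Suc j)"
    by simp
  then show ?thesis
    unfolding qnum_def by (simp only: of_real_divide) simp
qed

lemma jackson_int_polynomial:
  assumes "0 \<le> q" and "q < 1"
  shows "jackson_int q (\<lambda>x. \<Sum>j=0..N. c j * complex_of_real x ^ j)
    = (\<Sum>j=0..N. c j / complex_of_real (qnum q (Suc j)))"
proof -
  have ratio: "norm (complex_of_real (q ^ Suc j)) < 1" for j
  proof -
    have "q ^ Suc j < 1"
      using power_less_one_iff[OF assms(1), of "Suc j"] assms(2) by (metis zero_less_Suc)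
    then show ?thesis
      using assms(1) by (simp only: norm_of_real abs_of_nonneg zero_le_power)
  qed
  have "(\<Sum>j=0..N. c j * complex_of_real (q ^ i) ^ j) * complex_of_real (q ^ i)
      = (\<Sum>j=0..N. c j * complex_of_real (q ^ Suc j) ^ i)" for i
    by (simp add: sum_distrib_left sum_distrib_right power_mult[symmetric] power_mult_distrib
        power_add mult_ac flip: power_Suc)
  then have "jackson_int q (\<lambda>x. \<Sum>j=0..N. c j * complex_of_real x ^ j)
      = complex_of_real (1 - q) * (\<Sum>i. \<Sum>j=0..N. c j * complex_of_real (q ^ Suc j) ^ i)"
    by (simp add: jackson_int_def del: of_real_power)
  also have "(\<Sum>i. \<Sum>j=0..N. c j * complex_of_real (q ^ Suc j) ^ i)
      = (\<Sum>j=0..N. \<Sum>i. c j * complex_of_real (q ^ Suc j) ^ i)"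
    using ratio by (intro suminf_sum summable_mult summable_geometric)
  also have "\<dots> = (\<Sum>j=0..N. c j / (1 - complex_of_real (q ^ Suc j)))"
    using ratio by (simp add: suminf_mult suminf_geometric divide_inverse del: of_real_power)
  also have "complex_of_real (1 - q) * \<dots> = (\<Sum>j=0..N. c j / complex_of_real (qnum q (Suc j)))"
    unfolding sum_distrib_left
  proof (intro sum.cong refl)
    fix j
    have "complex_of_real (1 - q) * (c j / (1 - complex_of_real (q ^ Suc j)))
        = c j * (complex_of_real (1 - q) / (1 - complex_of_real (q ^ Suc j)))"
      by simp
    then show "complex_of_real (1 - q) * (c j / (1 - complex_of_real (q ^ Suc j)))
        = c j / complex_of_real (qnum q (Suc j))"
      unfolding qnum_Suc_reciprocal[OF assms] by simp
  qed
  finally show ?thesis .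
qed

lemma multi_jackson_polynomial:
  assumes "0 \<le> q" and "q < 1" and "\<And>p. F p = (\<Sum>j=0..N. c j * complex_of_real p ^ j)"
  shows "multi_jackson q k F = (\<Sum>j=0..N. c j * Li_div k q $ j)"
  using assms(3)
proof (induction k arbitrary: F c)
  case 0
  then show ?case
    by (simp add: Li_div_def)
next
  case (Suc k)
  have "multi_jackson q k (\<lambda>p. F (x * p)) = (\<Sum>j=0..N. (c j * complex_of_real x ^ j) * Li_div k q $ j)" for x
    by (rule Suc.IH) (simp add: Suc.prems power_mult_distrib mult_ac)
  then have "multi_jackson q (Suc k) F
      = jackson_int q (\<lambda>x. \<Sum>j=0..N. (c j * Li_div k q $ j) * complex_of_real x ^ j)"
    by (simp add: mult_ac)
  also have "\<dots> = (\<Sum>j=0..N. c j * Li_div k q $ j / complex_of_real (qnum q (Suc j)))"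
    by (rule jackson_int_polynomial[OF assms(1,2)])
  finally show ?case
    by (simp add: Li_div_def mult_ac)
qed

subsection \<open>Expansions in the coefficients of \<open>Li_div\<close>\<close>

text \<open>The lemmas below take \<open>s\<close> together with \<open>complex_of_real \<rho> = s\<close>, oriented so that the
  simplifier replaces the cast by \<open>s\<close>; the hat lemmas instantiate them at \<open>-\<rho>\<close>, \<open>-s\<close>.\<close>

definition Li_egf :: "nat \<Rightarrow> real \<Rightarrow> complex fps" where
  "Li_egf k q = Abs_fps (\<lambda>j. Li_div k q $ j / fact j)"

lemma qpoly_cauchy_eq_fps_nth:
  assumes "0 \<le> q" and "q < 1" and "s \<noteq> 0" and "complex_of_real \<rho> = s"
  shows "qpoly_cauchy k n \<rho> q z
    = fact n * ((fps_exp (- z) oo scaled_ln1p s) * (Li_egf k q oo scaled_ln1p s)) $ n"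
proof -
  define L where "L = scaled_ln1p s"
  define d where "d j = fact n / s ^ n * (((fps_exp (- z) oo L) * L ^ j) $ n / fact j)" for j
  have "falling ((complex_of_real p - z) / s) n = (\<Sum>j=0..n. d j * complex_of_real p ^ j)" for p
  proof -
    have "falling ((complex_of_real p - z) / s) n = fact n / s ^ n * (fps_exp (complex_of_real p - z) oo L) $ n"
      using falling_eq_fps_nth[OF assms(3), of "(complex_of_real p - z) / s" n] assms(3)
      by (simp add: L_def)
    also have "\<dots> = (\<Sum>j=0..n. d j * complex_of_real p ^ j)"
      by (simp add: L_def fps_exp_diff_compose_nth d_def sum_distrib_left mult_ac)
    finally show ?thesis .
  qed
  then have "multi_jackson q k (\<lambda>p. falling ((complex_of_real p - z) / s) n)
      = (\<Sum>j=0..n. d j * Li_div k q $ j)"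
    by (rule multi_jackson_polynomial[OF assms(1,2)])
  moreover have "((fps_exp (- z) oo L) * (Li_egf k q oo L)) $ n
      = (\<Sum>j=0..n. ((fps_exp (- z) oo L) * L ^ j) $ n / fact j * Li_div k q $ j)"
    using fps_mult_compose_nth[of L n n "fps_exp (- z) oo L" "Li_egf k q"]
    by (simp add: L_def Li_egf_def mult_ac)
  ultimately show ?thesis
    using assms(3,4) by (simp add: qpoly_cauchy_def L_def d_def sum_distrib_left mult_ac)
qed

lemma qpoly_cauchy_hat_eq: "qpoly_cauchy_hat k n \<rho> q z = (- 1) ^ n * qpoly_cauchy k n (- \<rho>) q z"
proof -
  have integrand: "(\<lambda>p. falling ((- complex_of_real p + z) / complex_of_real \<rho>) n)
      = (\<lambda>p. falling ((complex_of_real p - z) / complex_of_real (- \<rho>)) n)"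
    by (simp add: diff_divide_distrib)
  have sign: "(- 1) ^ n * complex_of_real (- \<rho>) ^ n = complex_of_real \<rho> ^ n"
    by (simp flip: power_mult_distrib)
  show ?thesis
    unfolding qpoly_cauchy_hat_def qpoly_cauchy_def integrand by (metis mult.assoc sign)
qed

lemma qpoly_bernoulli_expansion:
  assumes "s \<noteq> 0" and "complex_of_real \<rho> = s"
  shows "qpoly_bernoulli k n \<rho> q x
    = (\<Sum>m=0..n. Li_div k q $ m * ((- s) ^ n / (- s) ^ m * (fact m * S2w n m (x / s))))"
proof -
  have "((Li_div k q oo qW \<rho>) * fps_exp (- x)) $ n
      = (\<Sum>m=0..n. Li_div k q $ m * (fps_exp (- x) * scaled_expm1 (- s) ^ m) $ n)"
    using assms(2) by (simp add: qW_eq_scaled_expm1 mult.commute[of _ "fps_exp _"] fps_mult_compose_nth)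
  then show ?thesis
    using assms by (simp add: qpoly_bernoulli_def S2w_eq_fps_nth sum_distrib_left mult_ac)
qed

lemma qpoly_cauchy_expansion:
  assumes "0 \<le> q" and "q < 1" and "s \<noteq> 0" and "complex_of_real \<rho> = s"
  shows "qpoly_cauchy k n \<rho> q x
    = (\<Sum>m=0..n. Li_div k q $ m * ((- s) ^ n / (- s) ^ m * S1w n m (x / s)))"
proof -
  have "((fps_exp (- x) oo scaled_ln1p s) * (Li_egf k q oo scaled_ln1p s)) $ n
      = (\<Sum>m=0..n. Li_div k q $ m / fact m * ((fps_exp (- x) oo scaled_ln1p s) * scaled_ln1p s ^ m) $ n)"
    by (simp add: fps_mult_compose_nth[of _ n n] Li_egf_def)
  then show ?thesis
    using assms by (simp add: qpoly_cauchy_eq_fps_nth S1w_eq_fps_nth sum_distrib_left)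
qed

lemma Li_div_cauchy_expansion:
  assumes "0 \<le> q" and "q < 1" and "s \<noteq> 0" and "complex_of_real \<rho> = s" and "m \<le> N"
  shows "Li_div k q $ m = (\<Sum>l=0..N. s ^ m / s ^ l * (S2w m l (y / s) * qpoly_cauchy k l \<rho> q y))"
proof -
  let ?C = "(fps_exp (- y) oo scaled_ln1p s) * (Li_egf k q oo scaled_ln1p s)"
  have "?C oo scaled_expm1 s = fps_exp (- y) * Li_egf k q"
    using assms(3) by (simp add: fps_compose_mult_distrib fps_compose_left_cancel
        scaled_ln1p_compose_scaled_expm1)
  then have "Li_egf k q = fps_exp y * (?C oo scaled_expm1 s)"
    by (simp add: mult.assoc[symmetric] flip: fps_exp_add_mult)
  then have "Li_egf k q $ m = (\<Sum>l=0..N. ?C $ l * (fps_exp y * scaled_expm1 s ^ l) $ m)"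
    using fps_mult_compose_nth[OF scaled_expm1_nth_0 assms(5)] by metis
  also have "\<dots> = (\<Sum>l=0..N. qpoly_cauchy k l \<rho> q y / fact l * (s ^ m / s ^ l * S2w m l (y / s) * fact l / fact m))"
    by (intro sum.cong refl) (simp add: qpoly_cauchy_eq_fps_nth[OF assms(1-4)] S2w_eq_fps_nth[OF assms(3)])
  finally have expansion: "Li_div k q $ m / fact m
      = (\<Sum>l=0..N. qpoly_cauchy k l \<rho> q y / fact l * (s ^ m / s ^ l * S2w m l (y / s) * fact l / fact m))"
    by (simp add: Li_egf_def)
  have "Li_div k q $ m = fact m * (Li_div k q $ m / fact m)"
    by simp
  also have "\<dots> = (\<Sum>l=0..N. s ^ m / s ^ l * (S2w m l (y / s) * qpoly_cauchy k l \<rho> q y))"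
    unfolding expansion sum_distrib_left by (intro sum.cong refl) (simp add: mult_ac)
  finally show ?thesis .
qed

lemma Li_div_bernoulli_expansion:
  assumes "s \<noteq> 0" and "complex_of_real \<rho> = s" and "m \<le> N"
  shows "Li_div k q $ m = (\<Sum>l=0..N. s ^ m / s ^ l * (S1w m l (y / s) * qpoly_bernoulli k l \<rho> q y / fact m))"
proof -
  define T where "T = scaled_ln1p (- s)"
  define Bg where "Bg = (Li_div k q oo scaled_expm1 (- s)) * fps_exp (- y)"
  have "Bg oo T = Li_div k q * (fps_exp (- y) oo T)"
    using assms(1) by (simp add: Bg_def T_def fps_compose_mult_distrib fps_compose_assoc[symmetric]
        scaled_expm1_compose_scaled_ln1p)
  then have "(fps_exp y oo T) * (Bg oo T) = Li_div k q"
    by (simp add: T_def fps_compose_mult_distrib[symmetric] mult_ac flip: fps_exp_add_mult)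
  then have "Li_div k q $ m = (\<Sum>l=0..N. Bg $ l * ((fps_exp y oo T) * T ^ l) $ m)"
    using assms(3) by (metis T_def fps_mult_compose_nth scaled_ln1p_nth_0)
  also have "\<dots> = (\<Sum>l=0..N. qpoly_bernoulli k l \<rho> q y / fact l * (s ^ m / s ^ l * S1w m l (y / s) * fact l / fact m))"
    using assms(1,2) S1w_eq_fps_nth[of "- s" "- y"]
    by (intro sum.cong refl) (simp add: T_def Bg_def qpoly_bernoulli_def qW_eq_scaled_expm1)
  also have "\<dots> = (\<Sum>l=0..N. s ^ m / s ^ l * (S1w m l (y / s) * qpoly_bernoulli k l \<rho> q y / fact m))"
    by (intro sum.cong refl) (simp add: mult_ac)
  finally show ?thesis .
qed

lemma qpoly_cauchy_hat_expansion:
  assumes "0 \<le> q" and "q < 1" and "s \<noteq> 0" and "complex_of_real \<rho> = s"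
  shows "qpoly_cauchy_hat k n \<rho> q x
    = (\<Sum>m=0..n. Li_div k q $ m * (s ^ n / s ^ m * ((- 1) ^ n * S1w n m (- x / s))))"
  using assms qpoly_cauchy_expansion[OF assms(1,2), of "- s" "- \<rho>" k n x]
  by (simp add: qpoly_cauchy_hat_eq sum_distrib_left mult_ac)

lemma Li_div_cauchy_hat_expansion:
  assumes "0 \<le> q" and "q < 1" and "s \<noteq> 0" and "complex_of_real \<rho> = s" and "m \<le> N"
  shows "Li_div k q $ m
    = (\<Sum>l=0..N. (- 1) ^ l * ((- s) ^ m / (- s) ^ l) * (S2w m l (- y / s) * qpoly_cauchy_hat k l \<rho> q y))"
proof -
  have "qpoly_cauchy k l (- \<rho>) q y = (- 1) ^ l * qpoly_cauchy_hat k l \<rho> q y" for l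
    by (simp add: qpoly_cauchy_hat_eq mult.assoc[symmetric] flip: power_mult_distrib)
  then show ?thesis
    using assms Li_div_cauchy_expansion[OF assms(1,2), of "- s" "- \<rho>" m N k y]
    by (simp add: mult_ac)
qed

subsection \<open>Combining the expansions\<close>

lemma sum_substitute:
  fixes X :: "'a::comm_semiring_1"
  assumes "X = (\<Sum>m=0..n. A m * (u m * P m))"
    and "\<And>m. m \<le> n \<Longrightarrow> A m = (\<Sum>l=0..n. v l m * Q l m)"
    and "\<And>l m. l \<le> n \<Longrightarrow> m \<le> n \<Longrightarrow> v l m * u m = w l m"
  shows "X = (\<Sum>l=0..n. \<Sum>m=0..n. w l m * (Q l m * P m))"
proof -
  have "X = (\<Sum>m=0..n. (\<Sum>l=0..n. v l m * Q l m) * (u m * P m))"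
    unfolding assms(1) using assms(2) by (intro sum.cong refl) simp
  also have "\<dots> = (\<Sum>m=0..n. \<Sum>l=0..n. v l m * u m * (Q l m * P m))"
    by (simp add: sum_distrib_left sum_distrib_right mult_ac)
  also have "\<dots> = (\<Sum>m=0..n. \<Sum>l=0..n. w l m * (Q l m * P m))"
    using assms(3) by (intro sum.cong refl) simp
  also have "\<dots> = (\<Sum>l=0..n. \<Sum>m=0..n. w l m * (Q l m * P m))"
    by (rule sum.swap)
  finally show ?thesis .
qed

lemma power_divide_mult_power_divide:
  fixes s :: "'a::field"
  assumes "s \<noteq> 0" and "l \<le> n"
  shows "s ^ m / s ^ l * (s ^ n / s ^ m) = s ^ (n - l)"
proof -
  have "s ^ m / s ^ l * (s ^ n / s ^ m) = s ^ n / s ^ l"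
    using assms(1) by simp
  also have "\<dots> = s ^ (n - l)"
    using assms by (simp add: power_diff)
  finally show ?thesis .
qed

lemma power_divide_mult_minus_power_divide:
  fixes s :: "'a::field"
  assumes "s \<noteq> 0" and "l \<le> n" and "m \<le> n"
  shows "s ^ m / s ^ l * ((- s) ^ n / (- s) ^ m) = (- 1) ^ (n - m) * s ^ (n - l)"
proof -
  have "(- s) ^ n / (- s) ^ m = (- s) ^ (n - m)"
    using assms(1,3) by (simp add: power_diff)
  also have "\<dots> = (- 1) ^ (n - m) * s ^ (n - m)"
    by (rule power_minus)
  also have "s ^ (n - m) = s ^ n / s ^ m"
    using assms(1,3) by (simp add: power_diff)
  finally show ?thesis
    using power_divide_mult_power_divide[OF assms(1,2)] by (metis mult.left_commute)
qed

lemma minus_power_divide_mult_minus_power_divide: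
  fixes s :: "'a::field"
  assumes "s \<noteq> 0" and "l \<le> n"
  shows "(- 1) ^ l * ((- s) ^ m / (- s) ^ l) * ((- s) ^ n / (- s) ^ m) = (- 1) ^ n * s ^ (n - l)"
proof -
  have "(- 1) ^ l * (- 1) ^ (n - l) = ((- 1) ^ n :: 'a)"
    using assms(2) by (simp flip: power_add)
  then show ?thesis
    using power_divide_mult_power_divide[of "- s" l n m] assms
    by (simp only: mult.assoc power_minus[of s "n - l"]) (simp flip: mult.assoc)
qed

lemma qpoly_bernoulli_eq_cauchy_sum:
  assumes "0 \<le> q" and "q < 1" and "\<rho> \<noteq> 0"
  shows "qpoly_bernoulli k n \<rho> q x =
           (\<Sum>l=0..n. \<Sum>m=0..n. (-1) ^ (n - m) * fact m * complex_of_real \<rho> ^ (n - l) *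
              S2w n m (x / complex_of_real \<rho>) * S2w m l (y / complex_of_real \<rho>) *
              qpoly_cauchy k l \<rho> q y)"
proof -
  define s where "s = complex_of_real \<rho>"
  have s: "s \<noteq> 0" "complex_of_real \<rho> = s"
    using assms(3) by (simp_all add: s_def)
  have "qpoly_bernoulli k n \<rho> q x = (\<Sum>l=0..n. \<Sum>m=0..n. (- 1) ^ (n - m) * s ^ (n - l) *
      ((S2w m l (y / s) * qpoly_cauchy k l \<rho> q y) * (fact m * S2w n m (x / s))))"
    by (rule sum_substitute[OF qpoly_bernoulli_expansion[OF s] Li_div_cauchy_expansion[OF assms(1,2) s]])
      (assumption | rule power_divide_mult_minus_power_divide[OF s(1)])+
  also have "\<dots> = (\<Sum>l=0..n. \<Sum>m=0..n. (-1) ^ (n - m) * fact m * s ^ (n - l) * S2w n m (x / s) * S2w m l (y / s) * qpoly_cauchy k l \<rho> q y)"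
    by (simp only: times_divide_eq_left times_divide_eq_right mult_ac)
  finally show ?thesis
    unfolding s_def .
qed

lemma qpoly_bernoulli_eq_cauchy_hat_sum:
  assumes "0 \<le> q" and "q < 1" and "\<rho> \<noteq> 0"
  shows "qpoly_bernoulli k n \<rho> q x =
           (\<Sum>l=0..n. \<Sum>m=0..n. (-1) ^ n * fact m * complex_of_real \<rho> ^ (n - l) *
              S2w n m (x / complex_of_real \<rho>) * S2w m l (- y / complex_of_real \<rho>) *
              qpoly_cauchy_hat k l \<rho> q y)"
proof -
  define s where "s = complex_of_real \<rho>"
  have s: "s \<noteq> 0" "complex_of_real \<rho> = s"
    using assms(3) by (simp_all add: s_def)
  have "qpoly_bernoulli k n \<rho> q x = (\<Sum>l=0..n. \<Sum>m=0..n. (- 1) ^ n * s ^ (n - l) *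
      ((S2w m l (- y / s) * qpoly_cauchy_hat k l \<rho> q y) * (fact m * S2w n m (x / s))))"
    by (rule sum_substitute[OF qpoly_bernoulli_expansion[OF s] Li_div_cauchy_hat_expansion[OF assms(1,2) s]])
      (assumption | rule minus_power_divide_mult_minus_power_divide[OF s(1)])+
  also have "\<dots> = (\<Sum>l=0..n. \<Sum>m=0..n. (-1) ^ n * fact m * s ^ (n - l) * S2w n m (x / s) * S2w m l (- y / s) * qpoly_cauchy_hat k l \<rho> q y)"
    by (simp only: times_divide_eq_left times_divide_eq_right mult_ac)
  finally show ?thesis
    unfolding s_def .
qed

lemma qpoly_cauchy_eq_bernoulli_sum:
  assumes "0 \<le> q" and "q < 1" and "\<rho> \<noteq> 0"
  shows "qpoly_cauchy k n \<rho> q x =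
           (\<Sum>l=0..n. \<Sum>m=0..n. (-1) ^ (n - m) / fact m * complex_of_real \<rho> ^ (n - l) *
              S1w n m (x / complex_of_real \<rho>) * S1w m l (y / complex_of_real \<rho>) *
              qpoly_bernoulli k l \<rho> q y)"
proof -
  define s where "s = complex_of_real \<rho>"
  have s: "s \<noteq> 0" "complex_of_real \<rho> = s"
    using assms(3) by (simp_all add: s_def)
  have "qpoly_cauchy k n \<rho> q x = (\<Sum>l=0..n. \<Sum>m=0..n. (- 1) ^ (n - m) * s ^ (n - l) *
      ((S1w m l (y / s) * qpoly_bernoulli k l \<rho> q y / fact m) * S1w n m (x / s)))"
    by (rule sum_substitute[OF qpoly_cauchy_expansion[OF assms(1,2) s] Li_div_bernoulli_expansion[OF s]])
      (assumption | rule power_divide_mult_minus_power_divide[OF s(1)])+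
  also have "\<dots> = (\<Sum>l=0..n. \<Sum>m=0..n. (-1) ^ (n - m) / fact m * s ^ (n - l) * S1w n m (x / s) * S1w m l (y / s) * qpoly_bernoulli k l \<rho> q y)"
    by (simp only: times_divide_eq_left times_divide_eq_right mult_ac)
  finally show ?thesis
    unfolding s_def .
qed

lemma qpoly_cauchy_hat_eq_bernoulli_sum:
  assumes "0 \<le> q" and "q < 1" and "\<rho> \<noteq> 0"
  shows "qpoly_cauchy_hat k n \<rho> q x =
           (\<Sum>l=0..n. \<Sum>m=0..n. (-1) ^ n / fact m * complex_of_real \<rho> ^ (n - l) *
              S1w n m (- x / complex_of_real \<rho>) * S1w m l (y / complex_of_real \<rho>) *
              qpoly_bernoulli k l \<rho> q y)"
proof -
  define s where "s = complex_of_real \<rho>"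
  have s: "s \<noteq> 0" "complex_of_real \<rho> = s"
    using assms(3) by (simp_all add: s_def)
  have "qpoly_cauchy_hat k n \<rho> q x = (\<Sum>l=0..n. \<Sum>m=0..n. s ^ (n - l) *
      ((S1w m l (y / s) * qpoly_bernoulli k l \<rho> q y / fact m) * ((- 1) ^ n * S1w n m (- x / s))))"
    by (rule sum_substitute[OF qpoly_cauchy_hat_expansion[OF assms(1,2) s] Li_div_bernoulli_expansion[OF s]])
      (assumption | rule power_divide_mult_power_divide[OF s(1)])+
  also have "\<dots> = (\<Sum>l=0..n. \<Sum>m=0..n. (-1) ^ n / fact m * s ^ (n - l) * S1w n m (- x / s) * S1w m l (y / s) * qpoly_bernoulli k l \<rho> q y)"
    by (simp only: times_divide_eq_left times_divide_eq_right mult_ac)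
  finally show ?thesis
    unfolding s_def .
qed

theorem theorem8:
  fixes n k :: nat and \<rho> q :: real and x y :: complex
  assumes "k \<ge> 1" and "\<rho> \<noteq> 0" and "0 \<le> q" and "q < 1"
  shows "(qpoly_bernoulli k n \<rho> q x =
           (\<Sum>l=0..n. \<Sum>m=0..n. (-1) ^ (n - m) * fact m * complex_of_real \<rho> ^ (n - l) *
              S2w n m (x / complex_of_real \<rho>) * S2w m l (y / complex_of_real \<rho>) *
              qpoly_cauchy k l \<rho> q y)) \<and>
         (qpoly_bernoulli k n \<rho> q x =
           (\<Sum>l=0..n. \<Sum>m=0..n. (-1) ^ n * fact m * complex_of_real \<rho> ^ (n - l) *
              S2w n m (x / complex_of_real \<rho>) * S2w m l (- y / complex_of_real \<rho>) *
              qpoly_cauchy_hat k l \<rho> q y)) \<and>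
         (qpoly_cauchy k n \<rho> q x =
           (\<Sum>l=0..n. \<Sum>m=0..n. (-1) ^ (n - m) / fact m * complex_of_real \<rho> ^ (n - l) *
              S1w n m (x / complex_of_real \<rho>) * S1w m l (y / complex_of_real \<rho>) *
              qpoly_bernoulli k l \<rho> q y)) \<and>
         (qpoly_cauchy_hat k n \<rho> q x =
           (\<Sum>l=0..n. \<Sum>m=0..n. (-1) ^ n / fact m * complex_of_real \<rho> ^ (n - l) *
              S1w n m (- x / complex_of_real \<rho>) * S1w m l (y / complex_of_real \<rho>) *
              qpoly_bernoulli k l \<rho> q y))"
  by (intro conjI qpoly_bernoulli_eq_cauchy_sum[OF assms(3,4,2)]
      qpoly_bernoulli_eq_cauchy_hat_sum[OF assms(3,4,2)]
      qpoly_cauchy_eq_bernoulli_sum[OF assms(3,4,2)]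
      qpoly_cauchy_hat_eq_bernoulli_sum[OF assms(3,4,2)])

end
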